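(* Let $A$ be a Banach algebra and suppose there exists $a_0\in Z(A)$ with $a_0\neq 0$ and $\|a_0\|\le 1$. Then for every integer $n\geq 3$, $Mul_{n}(A)$ is a Banach algebra with the product $S\bullet_{a_0}T(a)=S(a_0^{n-2}T(a))$ ($a\in A$) and the operator norm; in particular $S\bullet_{a_0}T\in Mul_n(A)$ for all $S,T\in Mul_n(A)$, and $\bullet_{a_0}$ is associative.
   Context: $Z(A)$ is the center of $A$. $Mul_n(A)=Mul_n(A,A)$ is the set of bounded linear maps $T:A\to A$ with $T(a_1\cdots a_n)=a_1T(a_2\cdots a_n)=T(a_1\cdots a_{n-1})a_n$ for all $a_1,\dots,a_n\in A$ ($n$-multipliers on $A$), regarded as a subspace of $B(A)$, the bounded operators on $A$ with the operator norm. *)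

theory Defs
  imports "HOL-Analysis.Analysis"
begin

fun mprod :: "'a::times list \<Rightarrow> 'a" where
  "mprod [] = undefined"
| "mprod [x] = x"
| "mprod (x # y # xs) = x * mprod (y # xs)"

text \<open>Positive powers without a unit: npow a k = a^(k+1).\<close>
fun npow :: "'a::times \<Rightarrow> nat \<Rightarrow> 'a" where
  "npow a 0 = a"
| "npow a (Suc k) = a * npow a k"

definition center :: "'a::times set" where
  "center = {z. \<forall>b. z * b = b * z}"

definition Mul :: "nat \<Rightarrow> ('a::real_normed_algebra \<Rightarrow>\<^sub>L 'a) set" where
  "Mul n = {T. \<forall>xs. length xs = n \<longrightarrow>
      blinfun_apply T (mprod xs) = hd xs * blinfun_apply T (mprod (tl xs)) \<and>
      blinfun_apply T (mprod xs) = blinfun_apply T (mprod (butlast xs)) * last xs}"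

text \<open>The product (S \<bullet>_a0 T)(a) = S(a0^(n-2) T(a)).\<close>
definition mulprod :: "'a::real_normed_algebra \<Rightarrow> nat \<Rightarrow> ('a \<Rightarrow>\<^sub>L 'a) \<Rightarrow> ('a \<Rightarrow>\<^sub>L 'a) \<Rightarrow> ('a \<Rightarrow>\<^sub>L 'a)" where
  "mulprod a0 n S T = S o\<^sub>L (blinfun_mult_right (npow a0 (n - 3)) o\<^sub>L T)"

definition banach_algebra_on :: "'b::real_normed_vector set \<Rightarrow> ('b \<Rightarrow> 'b \<Rightarrow> 'b) \<Rightarrow> bool" where
  "banach_algebra_on M p \<longleftrightarrow>
     subspace M \<and> complete M \<and>
     (\<forall>S\<in>M. \<forall>T\<in>M. p S T \<in> M) \<and>
     (\<forall>R\<in>M. \<forall>S\<in>M. \<forall>T\<in>M. p (p R S) T = p R (p S T)) \<and>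
     (\<forall>R\<in>M. \<forall>S\<in>M. \<forall>T\<in>M. p (R + S) T = p R T + p S T \<and> p R (S + T) = p R S + p R T) \<and>
     (\<forall>c::real. \<forall>S\<in>M. \<forall>T\<in>M. p (c *\<^sub>R S) T = c *\<^sub>R p S T \<and> p S (c *\<^sub>R T) = c *\<^sub>R p S T) \<and>
     (\<forall>S\<in>M. \<forall>T\<in>M. norm (p S T) \<le> norm S * norm T)"

end

theory Submission
  imports Defs
begin

text \<open>Write c = a0^(n-2), so that (S \<bullet> T)(a) = S(c T(a)). Since c is itself a product of
  n - 2 factors, for a = a1...an the element a1 c T(a2...an) is an n-fold product; pulling a1 out
  of T and past the central c therefore lets the left multiplier identity of S apply, and the
  right identity works the same way without centrality. The defining identities of Mul n are
  closed linear conditions, so Mul n is a closed subspace of the Banach space B(A), and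
  \<parallel>c\<parallel> \<le> 1 makes the operator norm submultiplicative for \<bullet>.\<close>

lemma mprod_Cons: "ys \<noteq> [] \<Longrightarrow> mprod (x # ys) = x * mprod ys"
  by (cases ys) auto

lemma mprod_append:
  fixes xs ys :: "'a::semigroup_mult list"
  assumes "xs \<noteq> []" "ys \<noteq> []"
  shows "mprod (xs @ ys) = mprod xs * mprod ys"
  using assms by (induction xs rule: mprod.induct) (auto simp: mprod_Cons mult.assoc)

lemma npow_eq_mprod_replicate: "npow a k = mprod (replicate (Suc k) a)"
  by (induction k) (auto simp: mprod_Cons)

lemma npow_in_center:
  fixes a :: "'a::semigroup_mult"
  assumes "a \<in> center"
  shows "npow a k \<in> center"
proof (induction k)
  case (Suc k)
  have "npow a (Suc k) * b = b * npow a (Suc k)" for b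
  proof -
    have ab: "a * b = b * a" and kb: "npow a k * b = b * npow a k"
      using assms Suc unfolding center_def by blast+
    have "npow a (Suc k) * b = a * (npow a k * b)"
      by (simp add: mult.assoc)
    also have "\<dots> = (a * b) * npow a k"
      by (simp only: kb mult.assoc)
    also have "\<dots> = b * npow a (Suc k)"
      by (simp only: ab npow.simps mult.assoc)
    finally show ?thesis .
  qed
  then show ?case unfolding center_def by blast
qed (use assms in simp)

lemma norm_npow_le: "norm (npow (a::'a::real_normed_algebra) k) \<le> norm a ^ Suc k"
proof (induction k)
  case (Suc k)
  have "norm (npow a (Suc k)) \<le> norm a * norm (npow a k)"
    by (simp add: norm_mult_ineq)
  also have "\<dots> \<le> norm a * norm a ^ Suc k"
    using Suc by (simp add: mult_left_mono)
  finally show ?case by simp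
qed simp

lemma Mul_Cons:
  assumes "T \<in> Mul n" "length (x # ys) = n" "ys \<noteq> []"
  shows "T (mprod (x # ys)) = x * T (mprod ys)"
  using assms unfolding Mul_def by fastforce

lemma Mul_snoc:
  assumes "T \<in> Mul n" "length (ys @ [y]) = n" "ys \<noteq> []"
  shows "T (mprod (ys @ [y])) = T (mprod ys) * y"
  using assms unfolding Mul_def by fastforce

lemma Mul_compose_central_in_Mul:
  fixes S T :: "'a::real_normed_algebra \<Rightarrow>\<^sub>L 'a"
  assumes S: "S \<in> Mul n" and T: "T \<in> Mul n"
    and cs: "cs \<noteq> []" "length cs + 2 = n" and c: "mprod cs \<in> center"
  shows "S o\<^sub>L (blinfun_mult_right (mprod cs) o\<^sub>L T) \<in> Mul n"
proof -
  let ?c = "mprod cs"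
  have c_append: "mprod (cs @ ys) = ?c * mprod ys" if "ys \<noteq> []" for ys
    using mprod_append[OF cs(1) that] .
  have left: "S (?c * T (mprod (x # ys))) = x * S (?c * T (mprod ys))"
    if "length (x # ys) = n" for x ys
  proof -
    have ys: "ys \<noteq> []" using that cs by auto
    have cx: "?c * x = x * ?c" using c unfolding center_def by blast
    have "S (?c * T (mprod (x # ys))) = S (?c * (x * T (mprod ys)))"
      using Mul_Cons[OF T that ys] by simp
    also have "\<dots> = S (x * (?c * T (mprod ys)))"
      by (simp only: cx mult.assoc[symmetric])
    also have "\<dots> = S (mprod (x # cs @ [T (mprod ys)]))"
      using c_append[of "[T (mprod ys)]"] cs(1) by (simp add: mprod_Cons)
    also have "\<dots> = x * S (mprod (cs @ [T (mprod ys)]))"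
      using Mul_Cons[OF S] cs by simp
    finally show ?thesis using c_append[of "[T (mprod ys)]"] by simp
  qed
  have right: "S (?c * T (mprod (ys @ [y]))) = S (?c * T (mprod ys)) * y"
    if "length (ys @ [y]) = n" for ys y
  proof -
    have ys: "ys \<noteq> []" using that cs by auto
    have "S (?c * T (mprod (ys @ [y]))) = S (mprod ((cs @ [T (mprod ys)]) @ [y]))"
      using Mul_snoc[OF T that ys] c_append[of "[T (mprod ys), y]"] by (simp add: mult.assoc)
    also have "\<dots> = S (mprod (cs @ [T (mprod ys)])) * y"
      using Mul_snoc[OF S, of "cs @ [T (mprod ys)]" y] cs by simp
    finally show ?thesis using c_append[of "[T (mprod ys)]"] by simp
  qed
  show ?thesis
    unfolding Mul_def
  proof (intro CollectI allI impI conjI)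
    fix xs :: "'a list"
    assume len: "length xs = n"
    then obtain x ys where "xs = x # ys"
      using cs by (cases xs) auto
    with left len show "(S o\<^sub>L (blinfun_mult_right ?c o\<^sub>L T)) (mprod xs)
        = hd xs * (S o\<^sub>L (blinfun_mult_right ?c o\<^sub>L T)) (mprod (tl xs))"
      by simp
    obtain ys y where "xs = ys @ [y]"
      using len cs by (cases xs rule: rev_cases) auto
    with right len show "(S o\<^sub>L (blinfun_mult_right ?c o\<^sub>L T)) (mprod xs)
        = (S o\<^sub>L (blinfun_mult_right ?c o\<^sub>L T)) (mprod (butlast xs)) * last xs"
      by simp
  qed
qed

lemma subspace_closed_equalizer:
  assumes "bounded_linear f" "bounded_linear g"
  shows "subspace {x. f x = g x}" "closed {x. f x = g x}"
proof -
  have "bounded_linear (\<lambda>x. f x - g x)"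
    using assms by (rule bounded_linear_sub)
  then show "subspace {x. f x = g x}"
    using linear_subspace_kernel[of "\<lambda>x. f x - g x"] by (simp add: bounded_linear.linear)
  show "closed {x. f x = g x}"
    using assms by (intro closed_Collect_eq linear_continuous_on)
qed

lemma Mul_eq_INT:
  "Mul n = (\<Inter>xs\<in>{xs. length xs = n}.
     {T. blinfun_apply T (mprod xs) = hd xs * T (mprod (tl xs))} \<inter>
     {T. blinfun_apply T (mprod xs) = T (mprod (butlast xs)) * last xs})"
  unfolding Mul_def by auto

lemma bounded_linear_blinfun_evaluations:
  fixes a x :: "'a::real_normed_algebra"
  shows "bounded_linear (\<lambda>T::'a \<Rightarrow>\<^sub>L 'a. T x)"
    and "bounded_linear (\<lambda>T::'a \<Rightarrow>\<^sub>L 'a. a * T x)"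
    and "bounded_linear (\<lambda>T::'a \<Rightarrow>\<^sub>L 'a. T x * a)"
  using bounded_linear_compose[OF bounded_linear_mult_right bounded_linear_apply_blinfun]
    bounded_linear_compose[OF bounded_linear_mult_left bounded_linear_apply_blinfun]
  by simp_all

lemma subspace_Mul: "subspace (Mul n :: ('a::real_normed_algebra \<Rightarrow>\<^sub>L 'a) set)"
  unfolding Mul_eq_INT
  by (intro subspace_Int subspace_inter subspace_closed_equalizer bounded_linear_blinfun_evaluations)

lemma closed_Mul: "closed (Mul n :: ('a::real_normed_algebra \<Rightarrow>\<^sub>L 'a) set)"
  unfolding Mul_eq_INT
  by (intro closed_INT ballI closed_Int subspace_closed_equalizer bounded_linear_blinfun_evaluations)

lemma norm_mulprod_le:
  fixes a0 :: "'a::real_normed_algebra"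
  assumes "norm a0 \<le> 1"
  shows "norm (mulprod a0 n S T) \<le> norm S * norm T"
proof -
  let ?M = "blinfun_mult_right (npow a0 (n - 3))"
  have norm_c: "norm (npow a0 (n - 3)) \<le> 1"
    by (rule order_trans[OF norm_npow_le power_le_one]) (simp_all add: assms)
  have "norm (npow a0 (n - 3) * x) \<le> norm x" for x
    using norm_mult_ineq[of "npow a0 (n - 3)" x] mult_left_le_one_le[OF norm_ge_zero[of x] norm_ge_zero norm_c]
    by linarith
  then have M: "norm ?M \<le> 1"
    by (intro norm_blinfun_bound) simp_all
  have "norm (mulprod a0 n S T) \<le> norm S * (norm ?M * norm T)"
    unfolding mulprod_def
    by (meson norm_blinfun_compose norm_ge_zero mult_left_mono order_trans)
  also have "\<dots> \<le> norm S * norm T"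
    using M by (simp add: mult_left_mono mult_left_le_one_le)
  finally show ?thesis .
qed

lemma mulprod_assoc: "mulprod a0 n (mulprod a0 n R S) T = mulprod a0 n R (mulprod a0 n S T)"
  by (rule blinfun_eqI) (simp add: mulprod_def)

theorem mainTheorem6:
  fixes a0 :: "'a::{real_normed_algebra, banach}"
  assumes "a0 \<in> center" and "a0 \<noteq> 0" and "norm a0 \<le> 1"
    and "n \<ge> 3"
  shows "banach_algebra_on (Mul n) (mulprod a0 n)
    \<and> (\<forall>S\<in>Mul n. \<forall>T\<in>Mul n. mulprod a0 n S T \<in> Mul n)
    \<and> (\<forall>R\<in>Mul n. \<forall>S\<in>Mul n. \<forall>T\<in>Mul n.
          mulprod a0 n (mulprod a0 n R S) T = mulprod a0 n R (mulprod a0 n S T))"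
proof -
  have "Suc (n - 3) = n - 2"
    using assms(4) by arith
  then have c: "npow a0 (n - 3) = mprod (replicate (n - 2) a0)"
    by (simp only: npow_eq_mprod_replicate)
  have closed_under: "\<forall>S\<in>Mul n. \<forall>T\<in>Mul n. mulprod a0 n S T \<in> Mul n"
    using Mul_compose_central_in_Mul[of _ n _ "replicate (n - 2) a0"]
      npow_in_center[OF assms(1), of "n - 3"] assms(4)
    by (simp add: mulprod_def c)
  have bilinear: "mulprod a0 n (R + S) T = mulprod a0 n R T + mulprod a0 n S T"
    "mulprod a0 n R (S + T) = mulprod a0 n R S + mulprod a0 n R T"
    "mulprod a0 n (r *\<^sub>R S) T = r *\<^sub>R mulprod a0 n S T"
    "mulprod a0 n S (r *\<^sub>R T) = r *\<^sub>R mulprod a0 n S T" for R S T :: "'a \<Rightarrow>\<^sub>L 'a" and r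
    by (auto intro!: blinfun_eqI simp: mulprod_def blinfun.add_left blinfun.add_right
        blinfun.scaleR_left blinfun.scaleR_right distrib_left mult_scaleR_right)
  have "complete (Mul n :: ('a \<Rightarrow>\<^sub>L 'a) set)"
    using closed_Mul complete_eq_closed by blast
  then show ?thesis
    unfolding banach_algebra_on_def
    using closed_under
    by (simp add: subspace_Mul mulprod_assoc bilinear norm_mulprod_le[OF assms(3)])
qed

end
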